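(* Let $p>1$. If either $N\ge2$ and $M\le-\mu^*(1)$, or $N=1$ and $M<-\mu^*(1)$, then (E) has a ground state $u$, and it satisfies $u_r(r)^2<\frac{2p}{p+1}u(r)^{p+1}$ for all $r>0$. As a consequence, the corresponding trajectory $t\mapsto(x(t),y(t))$ does not converge to $(0,0)$ as $t\to\infty$. If moreover either $N\ge3$ and $1<p<\frac{N}{N-2}$, or $N\in\{1,2\}$, then this trajectory does not converge to $P_{1,M}$ as $t\to\infty$.
   Context: (E) denotes the ODE $-u_{rr}-\frac{N-1}{r}u_r=|u|^{p-1}u+M|u_r|^{\frac{2p}{p+1}}$ for $r>0$. A ground state is a nonnegative $u\in C^2([0,\infty))$ with $u_r(0)=0$ solving (E) on $(0,\infty)$. $\mu^*(1)=(p+1)\left(\frac{p+1}{2p}\right)^{\frac{p}{p+1}}$. Trajectory: $t=\ln r$, $x(t)=r^{\frac{2}{p-1}}u(r)$, $y(t)=-r^{\frac{p+1}{p-1}}u_r(r)$. With $K=\frac{(N-2)p-N}{p-1}$, in the last case the equation $X^{p-1}+M\left(\frac{2}{p-1}\right)^{\frac{2p}{p+1}}X^{\frac{p-1}{p+1}}-\frac{2K}{p-1}=0$ has two positive roots $X_{1,M}<X_{2,M}$, and $P_{1,M}=(X_{1,M},\frac{2}{p-1}X_{1,M})$. *)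

theory Defs
  imports "HOL-Analysis.Analysis"
begin

definition mu_star1 :: "real \<Rightarrow> real" where
  "mu_star1 p = (p + 1) * ((p + 1) / (2 * p)) powr (p / (p + 1))"

definition ground_state :: "nat \<Rightarrow> real \<Rightarrow> real \<Rightarrow> (real \<Rightarrow> real) \<Rightarrow> bool" where
  "ground_state N p M u \<longleftrightarrow>
     (\<forall>r\<ge>0. 0 \<le> u r) \<and>
     (\<exists>u1 u2.
        (\<forall>r\<ge>0. (u has_real_derivative u1 r) (at r within {0..}) \<and>
                 (u1 has_real_derivative u2 r) (at r within {0..})) \<and>
        continuous_on {0..} u2 \<and>
        u1 0 = 0 \<and>
        (\<forall>r>0. - u2 r - (real N - 1) / r * u1 r
                 = \<bar>u r\<bar> powr (p - 1) * u r + M * \<bar>u1 r\<bar> powr (2 * p / (p + 1))))"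

definition Kc :: "nat \<Rightarrow> real \<Rightarrow> real" where
  "Kc N p = ((real N - 2) * p - real N) / (p - 1)"

text \<open>The function whose positive zeros are X_{1,M} < X_{2,M}.\<close>
definition PhiM :: "nat \<Rightarrow> real \<Rightarrow> real \<Rightarrow> real \<Rightarrow> real" where
  "PhiM N p M X = X powr (p - 1) + M * (2 / (p - 1)) powr (2 * p / (p + 1)) * X powr ((p - 1) / (p + 1))
                  - 2 * Kc N p / (p - 1)"

definition traj :: "real \<Rightarrow> (real \<Rightarrow> real) \<Rightarrow> real \<Rightarrow> real \<times> real" where
  "traj p u t = (exp t powr (2 / (p - 1)) * u (exp t),
                 - (exp t powr ((p + 1) / (p - 1)) * deriv u (exp t)))"

end

theory Submission
  imports Defs
begin

text \<open>The ground state is the solution of (E) with \<open>u(0) = 1\<close>, \<open>u'(0) = 0\<close>. It is obtained by Picard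
  iteration for \<open>u' = v\<close>, \<open>(r\<^sup>N\<^sup>-\<^sup>1 v)' = - r\<^sup>N\<^sup>-\<^sup>1 F(u, v)\<close>, after truncating the nonlinearity \<open>F\<close> so
  that it is bounded and globally Lipschitz. A continuous induction shows that the solution never leaves
  the region \<open>u > 0\<close>, \<open>u' < 0\<close>, \<open>u'\<^sup>2 < q u\<^sup>p\<^sup>+\<^sup>1\<close> with \<open>q = 2p/(p+1)\<close>, where the truncation is inactive:
  on the curve \<open>u'\<^sup>2 = q u\<^sup>p\<^sup>+\<^sup>1\<close> the source has the sign of \<open>M + \<mu>\<^sup>*(1) \<le> 0\<close>, so
  \<open>q u\<^sup>p\<^sup>+\<^sup>1 - u'\<^sup>2\<close> is increasing whenever it vanishes (strictly, thanks to the damping term if \<open>N \<ge> 2\<close>).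
  In the phase plane the region reads \<open>y\<^sup>2 < q x\<^sup>p\<^sup>+\<^sup>1\<close>. Below this curve \<open>x' = 2x/(p-1) - y > 0\<close> as long as
  \<open>x\<close> is small, so \<open>x\<close> cannot tend to \<open>0\<close>; and a convexity argument puts \<open>P\<^sub>1\<^sub>,\<^sub>M\<close> strictly above the
  curve, so the trajectory cannot converge to it either.\<close>

lemma at_within_Icc_eq_Ici:
  fixes x b :: real
  assumes "0 \<le> x" "x < b"
  shows "at x within {0..b} = at x within {0..}"
  by (rule at_within_nhd[of x "{..<b}"]) (use assms in auto)

lemma continuous_on_Ici_if_Icc:
  fixes f :: "real \<Rightarrow> real"
  assumes "\<And>T. continuous_on {0..T} f"
  shows "continuous_on {0..} f"
  unfolding continuous_on_eq_continuous_within
proof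
  fix x :: real assume x: "x \<in> {0..}"
  have "continuous (at x within {0..x+1}) f"
    using assms[of "x + 1"] x by (simp add: continuous_on_eq_continuous_within)
  then show "continuous (at x within {0..}) f"
    using at_within_Icc_eq_Ici[of x "x + 1"] x by simp
qed

lemma continuous_on_Icc_if_Ici:
  fixes f :: "real \<Rightarrow> real"
  shows "continuous_on {0..} f \<Longrightarrow> continuous_on {0..r} f"
  by (rule continuous_on_subset) auto

lemma integrable_on_Icc_if_continuous_on_Ici:
  fixes f :: "real \<Rightarrow> real"
  shows "continuous_on {0..} f \<Longrightarrow> f integrable_on {0..r}"
  by (rule integrable_continuous_interval, rule continuous_on_Icc_if_Ici)

lemma abs_integral_le_integral_abs:
  fixes f :: "real \<Rightarrow> real"
  assumes "continuous_on {0..} f"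
  shows "\<bar>integral {0..r} f\<bar> \<le> integral {0..r} (\<lambda>s. \<bar>f s\<bar>)"
  using integral_norm_bound_integral[of f "{0..r}" "\<lambda>s. \<bar>f s\<bar>"]
  by (auto intro!: integrable_on_Icc_if_continuous_on_Ici continuous_intros assms)

lemma has_integral_power_Icc0:
  assumes "0 \<le> r"
  shows "((\<lambda>s. s ^ n) has_integral r ^ Suc n / Suc n) {0..r}"
proof -
  have "((\<lambda>s. s ^ n) has_integral r ^ Suc n / Suc n - 0 ^ Suc n / Suc n) {0..r}"
  proof (rule fundamental_theorem_of_calculus[OF assms])
    fix x :: real
    have "((\<lambda>s. s ^ Suc n / Suc n) has_real_derivative x ^ n) (at x within {0..r})"
      using DERIV_cdivide[OF DERIV_pow[of "Suc n" x], of "Suc n"] by simp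
    then show "((\<lambda>s. s ^ Suc n / Suc n) has_vector_derivative x ^ n) (at x within {0..r})"
      by (simp flip: has_real_derivative_iff_has_vector_derivative)
  qed
  then show ?thesis by simp
qed

lemma has_real_derivative_integral_Ici:
  fixes f :: "real \<Rightarrow> real"
  assumes f: "continuous_on {0..} f" and r: "0 \<le> r"
  shows "((\<lambda>x. integral {0..x} f) has_real_derivative f r) (at r within {0..})"
proof -
  have "((\<lambda>x. integral {0..x} f) has_real_derivative f r) (at r within {0..r+1})"
    by (rule integral_has_real_derivative[OF continuous_on_Icc_if_Ici[OF f]]) (use r in auto)
  then show ?thesis using at_within_Icc_eq_Ici[of r "r+1"] r by simp
qed

lemma continuous_induction_pos_real:
  fixes P :: "real \<Rightarrow> bool"
  assumes start: "eventually P (at_right 0)"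
    and closed: "\<And>r. r > 0 \<Longrightarrow> (\<And>s. 0 < s \<Longrightarrow> s < r \<Longrightarrow> P s) \<Longrightarrow> P r"
    and extend: "\<And>r. r > 0 \<Longrightarrow> (\<And>s. 0 < s \<Longrightarrow> s \<le> r \<Longrightarrow> P s) \<Longrightarrow> eventually P (at_right r)"
    and r: "r > 0"
  shows "P r"
proof (rule ccontr)
  define A where "A = {s. 0 < s \<and> \<not> P s}"
  assume "\<not> P r"
  then have "A \<noteq> {}" using r by (auto simp: A_def)
  have bdd: "bdd_below A" unfolding A_def by (rule bdd_belowI[of _ 0]) auto
  define c where "c = Inf A"
  have below: "P s" if "0 < s" "s < c" for s
    using cInf_lower[OF _ bdd, of s] that unfolding A_def c_def by force
  obtain d where "d > 0" and d: "\<And>s. 0 < s \<Longrightarrow> s < d \<Longrightarrow> P s"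
    using start unfolding eventually_at_right_field by auto
  have "d \<le> c"
    unfolding c_def by (rule cInf_greatest[OF \<open>A \<noteq> {}\<close>]) (use d in \<open>force simp: A_def\<close>)
  then have "c > 0" using \<open>d > 0\<close> by simp
  then have "P c" using closed below by blast
  then have "P s" if "0 < s" "s \<le> c" for s
    using below that by (cases "s = c") auto
  then have "eventually P (at_right c)"
    using extend[OF \<open>c > 0\<close>] by blast
  then obtain b where "b > c" and b: "\<And>s. c < s \<Longrightarrow> s < b \<Longrightarrow> P s"
    unfolding eventually_at_right_field by auto
  have "b \<le> c"
    unfolding c_def
  proof (rule cInf_greatest[OF \<open>A \<noteq> {}\<close>])
    fix a assume a: "a \<in> A"
    then have "c \<le> a" "\<not> P a" using cInf_lower[OF _ bdd] by (auto simp: A_def c_def)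
    with \<open>P c\<close> b show "b \<le> a" by (cases "a = c") force+
  qed
  with \<open>b > c\<close> show False by simp
qed

lemma eventually_at_left_greater_if_deriv_neg:
  fixes f :: "real \<Rightarrow> real"
  assumes "(f has_real_derivative l) (at x)" "l < 0"
  shows "eventually (\<lambda>y. f x < f y) (at_left x)"
proof -
  obtain d where "d > 0" and d: "\<And>h. 0 < h \<Longrightarrow> h < d \<Longrightarrow> f x < f (x - h)"
    using DERIV_neg_dec_left[OF assms] by blast
  show ?thesis
    unfolding eventually_at_left_field
    by (rule exI[of _ "x - d"]) (use \<open>d > 0\<close> d[of "x - _"] in force)
qed

lemma eventually_at_left_less_if_deriv_pos:
  fixes f :: "real \<Rightarrow> real"
  assumes "(f has_real_derivative l) (at x)" "l > 0"
  shows "eventually (\<lambda>y. f y < f x) (at_left x)"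
  using eventually_at_left_greater_if_deriv_neg[OF DERIV_minus[OF assms(1)]] assms(2) by simp

lemma powr_diff_le_mean_value:
  fixes x y c e :: real
  assumes e: "e \<ge> 1" and xy: "0 \<le> y" "y \<le> x" "x \<le> c"
  shows "x powr e - y powr e \<le> e * c powr (e - 1) * (x - y)"
proof (cases "y = x")
  case False
  then have "y < x" using xy by simp
  have "continuous_on {y..x} (\<lambda>t. t powr e)"
    by (rule continuous_on_powr'[OF continuous_on_id continuous_on_const]) (use xy e in auto)
  moreover have "(\<lambda>t. t powr e) differentiable (at z)" if "y < z" for z
    using has_real_derivative_powr[of z e] that xy real_differentiable_def by force
  ultimately obtain l z where z: "y < z" "z < x" and d: "DERIV (\<lambda>t. t powr e) z :> l"
    and eq: "x powr e - y powr e = (x - y) * l"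
    using MVT[OF \<open>y < x\<close>] by blast
  have "l = e * z powr (e - 1)"
    using DERIV_unique[OF d has_real_derivative_powr] z xy by simp
  also have "\<dots> \<le> e * c powr (e - 1)"
    using e z xy by (intro mult_left_mono powr_mono2) auto
  finally have "(x - y) * l \<le> (x - y) * (e * c powr (e - 1))"
    using xy by (intro mult_left_mono) auto
  then show ?thesis
    using eq by (simp add: mult.commute)
qed simp

lemma abs_powr_diff_le:
  fixes x y c e :: real
  assumes "e \<ge> 1" "0 \<le> x" "x \<le> c" "0 \<le> y" "y \<le> c"
  shows "\<bar>x powr e - y powr e\<bar> \<le> e * c powr (e - 1) * \<bar>x - y\<bar>"
proof (cases "y \<le> x")
  case True
  then show ?thesis
    using powr_diff_le_mean_value[of e y x c] powr_mono2[of e y x] assms by simp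
next
  case False
  then show ?thesis
    using powr_diff_le_mean_value[of e x y c] powr_mono2[of e x y] assms by simp
qed

lemma powr_le_tangent:
  fixes x y s :: real
  assumes s: "0 < s" "s < 1" and "x > 0" "y > 0"
  shows "x powr s \<le> y powr s + s * y powr (s - 1) * (x - y)"
proof -
  have "x powr s * y powr (1 - s) \<le> s * x + (1 - s) * y"
    using Youngs_inequality_0[of s "1 - s" x y] assms by simp
  then have "x powr s * y powr (1 - s) * y powr (s - 1) \<le> (s * x + (1 - s) * y) * y powr (s - 1)"
    using assms by (intro mult_right_mono) auto
  moreover have "y powr (1 - s) * y powr (s - 1) = 1"
    using assms by (simp flip: powr_add)
  moreover have "y * y powr (s - 1) = y powr s"
    using assms powr_add[of y 1 "s - 1"] by simp
  ultimately show ?thesis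
    by (simp add: algebra_simps)
qed

lemma abs_le_twice_if_square_le_powr:
  fixes U V c p :: real
  assumes "0 < U" "U \<le> 1" "1 \<le> p" "c \<le> 2" "V\<^sup>2 \<le> c * U powr (p + 1)"
  shows "\<bar>V\<bar> \<le> 2 * U"
proof -
  have "U powr (p + 1) \<le> U\<^sup>2"
    using assms powr_mono'[of 2 "p + 1" U] by simp
  moreover have "c * U powr (p + 1) \<le> 2 * U powr (p + 1)"
    using assms by (intro mult_right_mono) auto
  ultimately have "V\<^sup>2 \<le> 2 * U\<^sup>2"
    using assms(5) by linarith
  also have "\<dots> \<le> (2 * U)\<^sup>2"
    by (simp add: power_mult_distrib)
  finally have "\<bar>V\<bar>\<^sup>2 \<le> (2 * U)\<^sup>2"
    by simp
  from power2_le_imp_le[OF this] show ?thesis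
    using assms(1) by simp
qed

section \<open>Radial primitives\<close>

text \<open>For \<open>N \<ge> 1\<close> this is the solution \<open>w\<close> of \<open>(r\<^sup>N\<^sup>-\<^sup>1 w)' = r\<^sup>N\<^sup>-\<^sup>1 g\<close> with \<open>w 0 = 0\<close>.\<close>
definition radial_primitive :: "nat \<Rightarrow> (real \<Rightarrow> real) \<Rightarrow> real \<Rightarrow> real" where
  "radial_primitive N g r = integral {0..r} (\<lambda>s. s ^ (N - 1) * g s) / r ^ (N - 1)"

lemma radial_primitive_0 [simp]: "radial_primitive N g 0 = 0"
  by (simp add: radial_primitive_def)

lemma integrable_power_mult:
  fixes g :: "real \<Rightarrow> real"
  assumes "continuous_on {0..} g"
  shows "(\<lambda>s. s ^ k * g s) integrable_on {0..r}"
  by (intro integrable_on_Icc_if_continuous_on_Ici continuous_intros assms)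

lemma abs_radial_primitive_le:
  assumes g: "continuous_on {0..} g" and r: "0 \<le> r"
  shows "\<bar>radial_primitive N g r\<bar> \<le> integral {0..r} (\<lambda>s. \<bar>g s\<bar>)"
proof (cases "r = 0")
  case False
  then have r: "r > 0" using r by simp
  have "\<bar>integral {0..r} (\<lambda>s. s ^ (N - 1) * g s)\<bar> \<le> integral {0..r} (\<lambda>s. r ^ (N - 1) * \<bar>g s\<bar>)"
  proof (rule order_trans[OF _ integral_le])
    show "\<bar>integral {0..r} (\<lambda>s. s ^ (N - 1) * g s)\<bar> \<le> integral {0..r} (\<lambda>s. \<bar>s ^ (N - 1) * g s\<bar>)"
      by (intro abs_integral_le_integral_abs continuous_intros g)
    show "\<bar>s ^ (N - 1) * g s\<bar> \<le> r ^ (N - 1) * \<bar>g s\<bar>" if "s \<in> {0..r}" for s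
      using that by (auto simp: abs_mult intro!: mult_right_mono power_mono)
  qed (auto intro!: integrable_on_Icc_if_continuous_on_Ici continuous_intros g)
  then show ?thesis
    using r by (simp add: radial_primitive_def abs_divide divide_le_eq mult.commute)
qed simp

lemma radial_primitive_const:
  assumes "N \<ge> 1" "0 \<le> r"
  shows "radial_primitive N (\<lambda>_. c) r = c * r / N"
proof (cases "r = 0")
  case False
  have "integral {0..r} (\<lambda>s. s ^ (N - 1)) = r ^ N / N"
    using integral_unique[OF has_integral_power_Icc0[OF assms(2), of "N - 1"]] assms(1) by simp
  moreover have "r ^ N = r * r ^ (N - 1)"
    using assms(1) by (simp flip: power_Suc)
  ultimately show ?thesis using False by (simp add: radial_primitive_def)
qed simp

lemma radial_primitive_diff:
  assumes "continuous_on {0..} f" "continuous_on {0..} g"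
  shows "radial_primitive N (\<lambda>s. f s - g s) r = radial_primitive N f r - radial_primitive N g r"
proof -
  have "integral {0..r} (\<lambda>s. s ^ (N - 1) * (f s - g s))
      = integral {0..r} (\<lambda>s. s ^ (N - 1) * f s) - integral {0..r} (\<lambda>s. s ^ (N - 1) * g s)"
    unfolding right_diff_distrib by (intro integral_diff integrable_power_mult assms)
  then show ?thesis by (simp add: radial_primitive_def diff_divide_distrib)
qed

lemma has_real_derivative_radial_primitive:
  assumes g: "continuous_on {0..} g" and r: "r > 0"
  shows "(radial_primitive N g has_real_derivative g r - real (N - 1) / r * radial_primitive N g r) (at r)"
proof -
  let ?h = "\<lambda>s. s ^ (N - 1) * g s"
  have "((\<lambda>x. integral {0..x} ?h) has_real_derivative ?h r) (at r within {0..})"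
    by (intro has_real_derivative_integral_Ici continuous_intros g) (use r in simp)
  moreover have "at r within {0..} = at r"
    by (rule at_within_interior) (use r in auto)
  ultimately have d1: "((\<lambda>x. integral {0..x} ?h) has_real_derivative ?h r) (at r)" by simp
  have d2: "((\<lambda>x. x ^ (N - 1)) has_real_derivative real (N - 1) * r ^ (N - 1 - 1)) (at r)"
    using DERIV_pow[of "N - 1" r] by simp
  have "(radial_primitive N g has_real_derivative
      (?h r * r ^ (N - 1) - integral {0..r} ?h * (real (N - 1) * r ^ (N - 1 - 1))) / (r ^ (N - 1) * r ^ (N - 1))) (at r)"
    unfolding radial_primitive_def[abs_def]
    by (rule DERIV_divide[OF d1 d2]) (use r in simp)
  moreover have "(?h r * r ^ (N - 1) - integral {0..r} ?h * (real (N - 1) * r ^ (N - 1 - 1))) / (r ^ (N - 1) * r ^ (N - 1))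
      = g r - real (N - 1) / r * radial_primitive N g r"
    using r by (cases "N - 1") (simp_all add: radial_primitive_def field_simps)
  ultimately show ?thesis by simp
qed

lemma has_real_derivative_radial_primitive_0:
  assumes g: "continuous_on {0..} g" and N: "N \<ge> 1"
  shows "(radial_primitive N g has_real_derivative g 0 / N) (at 0 within {0..})"
proof -
  define h where "h s = \<bar>g s - g 0\<bar>" for s
  have ch: "continuous_on {0..} h"
    unfolding h_def by (intro continuous_intros g)
  have "((\<lambda>y. integral {0..y} h) has_real_derivative h 0) (at 0 within {0..})"
    by (rule has_real_derivative_integral_Ici[OF ch]) simp
  then have lim_h: "((\<lambda>y. integral {0..y} h / y) \<longlongrightarrow> 0) (at 0 within {0..})"
    by (simp add: has_field_derivative_iff h_def)
  have "\<forall>\<^sub>F y in at 0 within {0..}.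
      norm ((radial_primitive N g y - radial_primitive N g 0) / (y - 0) - g 0 / N) \<le> integral {0..y} h / y"
    unfolding eventually_at_filter
  proof (intro always_eventually allI impI)
    fix y :: real assume "y \<noteq> 0" "y \<in> {0..}"
    then have y: "y > 0" by simp
    have "radial_primitive N g y = radial_primitive N (\<lambda>s. g s - g 0) y + g 0 * y / N"
      using radial_primitive_diff[OF g, of "\<lambda>_. g 0" N y] radial_primitive_const[OF N, of y "g 0"] y
      by simp
    moreover have "\<bar>radial_primitive N (\<lambda>s. g s - g 0) y\<bar> \<le> integral {0..y} h"
      unfolding h_def by (rule abs_radial_primitive_le) (use y in \<open>auto intro!: continuous_intros g\<close>)
    ultimately show "norm ((radial_primitive N g y - radial_primitive N g 0) / (y - 0) - g 0 / N)
        \<le> integral {0..y} h / y"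
      using y by (simp add: divide_right_mono abs_divide add_divide_distrib)
  qed
  from Lim_null_comparison[OF this lim_h] show ?thesis
    by (simp add: has_field_derivative_iff LIM_zero_iff)
qed

lemma continuous_on_radial_primitive:
  assumes g: "continuous_on {0..} g" and N: "N \<ge> 1"
  shows "continuous_on {0..} (radial_primitive N g)"
proof (rule DERIV_continuous_on)
  fix r :: real assume "r \<in> {0..}"
  then consider "r = 0" | "r > 0" by fastforce
  then show "(radial_primitive N g has_real_derivative
      (if r = 0 then g 0 / N else g r - real (N - 1) / r * radial_primitive N g r)) (at r within {0..})"
  proof cases
    case 2
    then show ?thesis
      using has_real_derivative_radial_primitive[OF g 2] by (auto intro: has_field_derivative_at_within)
  qed (simp add: has_real_derivative_radial_primitive_0[OF g N])
qed

section \<open>The radial initial value problem\<close>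

lemma continuous_on_lipschitz2_compose:
  fixes F :: "real \<Rightarrow> real \<Rightarrow> real"
  assumes lipschitz: "\<And>a b c d. \<bar>F a b - F c d\<bar> \<le> L * (\<bar>a - c\<bar> + \<bar>b - d\<bar>)"
    and "continuous_on S U" "continuous_on S V"
  shows "continuous_on S (\<lambda>s. F (U s) (V s))"
proof -
  have "L \<ge> 0"
    using lipschitz[of 1 0 0 0] by simp

  have "lipschitz_on (2 * L) UNIV (\<lambda>(a, b). F a b)"
  proof (rule lipschitz_onI)
    fix x y :: "real \<times> real"
    have "\<bar>fst x - fst y\<bar> + \<bar>snd x - snd y\<bar> \<le> 2 * dist x y"
      using dist_fst_le[of x y] dist_snd_le[of x y] by (simp add: dist_real_def)
    then show "dist ((\<lambda>(a, b). F a b) x) ((\<lambda>(a, b). F a b) y) \<le> 2 * L * dist x y"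
      using lipschitz[of "fst x" "snd x" "fst y" "snd y"] \<open>L \<ge> 0\<close> mult_left_mono[of _ _ L]
      by (fastforce simp: dist_real_def case_prod_beta)
  qed (use \<open>L \<ge> 0\<close> in simp)
  then have "continuous_on UNIV (\<lambda>(a, b). F a b)"
    by (rule lipschitz_on_continuous_on)
  from continuous_on_compose2[OF this continuous_on_Pair[OF assms(2,3)]] show ?thesis
    by simp
qed

locale radial_solution =
  fixes N :: nat and F :: "real \<Rightarrow> real \<Rightarrow> real" and u0 :: real and u v :: "real \<Rightarrow> real"
  assumes N_ge_1: "N \<ge> 1"
    and u_0: "u 0 = u0" and v_0: "v 0 = 0"
    and u_deriv: "\<And>r. r \<ge> 0 \<Longrightarrow> (u has_real_derivative v r) (at r within {0..})"
    and v_deriv: "\<And>r. r > 0 \<Longrightarrow> (v has_real_derivative - F (u r) (v r) - (real N - 1) / r * v r) (at r)"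
    and v_deriv_0: "(v has_real_derivative - F u0 0 / N) (at 0 within {0..})"

context radial_solution
begin

lemma u_deriv_at:
  assumes r: "r > 0"
  shows "(u has_real_derivative v r) (at r)"
proof -
  have "(u has_real_derivative v r) (at r within {0<..})"
    by (rule DERIV_subset[OF u_deriv]) (use r in auto)
  then show ?thesis
    using at_within_open[of r "{0<..}"] r by simp
qed

lemma continuous_on_u: "continuous_on {0..} u"
  using DERIV_continuous_on[OF u_deriv] by simp

lemma continuous_on_v: "continuous_on {0..} v"
proof (rule DERIV_continuous_on)
  fix r :: real assume "r \<in> {0..}"
  then consider "r = 0" | "r > 0" by fastforce
  then show "(v has_real_derivative
      (if r = 0 then - F u0 0 / N else - F (u r) (v r) - (real N - 1) / r * v r)) (at r within {0..})"
  proof cases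
    case 2
    then show ?thesis
      using has_field_derivative_at_within[OF v_deriv[OF 2]] by simp
  qed (use v_deriv_0 in simp)
qed

lemma isCont_u: "r > 0 \<Longrightarrow> isCont u r"
  using u_deriv_at by (rule DERIV_isCont)

lemma isCont_v: "r > 0 \<Longrightarrow> isCont v r"
  using v_deriv by (rule DERIV_isCont)

lemma u_le_u0:
  assumes "0 \<le> r" "\<And>s. 0 < s \<Longrightarrow> s < r \<Longrightarrow> v s \<le> 0"
  shows "u r \<le> u0"
  using DERIV_nonpos_imp_decreasing_open[of 0 r u] u_deriv_at assms
    continuous_on_subset[OF continuous_on_u, of "{0..r}"] u_0
  by fastforce

lemma v_div_tendsto: "((\<lambda>y. v y / y) \<longlongrightarrow> - F u0 0 / N) (at_right 0)"
  using v_deriv_0 by (simp add: has_field_derivative_iff v_0 at_within_Ici_at_right)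

end

locale radial_lipschitz_ivp =
  fixes N :: nat and F :: "real \<Rightarrow> real \<Rightarrow> real" and u0 L B :: real
  assumes N_ge_1: "N \<ge> 1"
    and lipschitz: "\<And>a b c d. \<bar>F a b - F c d\<bar> \<le> L * (\<bar>a - c\<bar> + \<bar>b - d\<bar>)"
    and bounded: "\<And>a b. \<bar>F a b\<bar> \<le> B"
begin

primrec iterate :: "nat \<Rightarrow> (real \<Rightarrow> real) \<times> (real \<Rightarrow> real)" where
  "iterate 0 = (\<lambda>_. u0, \<lambda>_. 0)"
| "iterate (Suc n) =
     (\<lambda>r. u0 + integral {0..r} (snd (iterate n)),
      \<lambda>r. - radial_primitive N (\<lambda>s. F (fst (iterate n) s) (snd (iterate n) s)) r)"

definition "U n = fst (iterate n)"
definition "V n = snd (iterate n)"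
definition "G n s = F (U n s) (V n s)"

lemma U_0: "U 0 = (\<lambda>_. u0)" and V_0: "V 0 = (\<lambda>_. 0)"
  and U_Suc: "U (Suc n) = (\<lambda>r. u0 + integral {0..r} (V n))"
  and V_Suc: "V (Suc n) = (\<lambda>r. - radial_primitive N (G n) r)"
  by (simp_all add: U_def V_def G_def[abs_def])

lemma continuous_on_U_V: "continuous_on {0..} (U n) \<and> continuous_on {0..} (V n)"
proof (induction n)
  case (Suc n)
  then have "continuous_on {0..} (G n)"
    unfolding G_def[abs_def] by (intro continuous_on_lipschitz2_compose[OF lipschitz]) auto
  then show ?case
    unfolding U_Suc V_Suc
    using Suc continuous_on_radial_primitive[OF _ N_ge_1]
      DERIV_continuous_on[OF has_real_derivative_integral_Ici[of "V n"]]
    by (auto intro!: continuous_intros)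
qed (simp add: U_0 V_0)

lemma continuous_on_G: "continuous_on {0..} (G n)"
  unfolding G_def[abs_def] using continuous_on_U_V by (intro continuous_on_lipschitz2_compose[OF lipschitz]) auto

definition "gap n s = \<bar>U (Suc n) s - U n s\<bar> + \<bar>V (Suc n) s - V n s\<bar>"

lemma continuous_on_gap: "continuous_on {0..} (gap n)"
  unfolding gap_def[abs_def] using continuous_on_U_V by (intro continuous_intros) auto

lemma gap_Suc_le:
  assumes r: "0 \<le> r"
  shows "gap (Suc n) r \<le> (1 + L) * integral {0..r} (gap n)"
proof -
  have int: "f integrable_on {0..r}" if "continuous_on {0..} f" for f :: "real \<Rightarrow> real"
    using that by (rule integrable_on_Icc_if_continuous_on_Ici)
  have "U (Suc (Suc n)) r - U (Suc n) r = integral {0..r} (\<lambda>s. V (Suc n) s - V n s)"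
    unfolding U_Suc using continuous_on_U_V by (simp add: integral_diff int)
  also have "\<bar>\<dots>\<bar> \<le> integral {0..r} (\<lambda>s. \<bar>V (Suc n) s - V n s\<bar>)"
    using continuous_on_U_V by (intro abs_integral_le_integral_abs continuous_intros) auto
  also have "\<dots> \<le> integral {0..r} (gap n)"
    using continuous_on_U_V continuous_on_gap
    by (intro integral_le int continuous_intros) (auto simp: gap_def)
  finally have dU: "\<bar>U (Suc (Suc n)) r - U (Suc n) r\<bar> \<le> integral {0..r} (gap n)" .
  have "V (Suc (Suc n)) r - V (Suc n) r = - radial_primitive N (\<lambda>s. G (Suc n) s - G n s) r"
    unfolding V_Suc using radial_primitive_diff[OF continuous_on_G continuous_on_G] by simp
  then have "\<bar>V (Suc (Suc n)) r - V (Suc n) r\<bar> \<le> integral {0..r} (\<lambda>s. \<bar>G (Suc n) s - G n s\<bar>)"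
    using abs_radial_primitive_le[OF _ r] continuous_on_G by (simp add: continuous_on_diff)
  also have "\<dots> \<le> integral {0..r} (\<lambda>s. L * gap n s)"
    using continuous_on_G continuous_on_gap
    by (intro integral_le int continuous_intros) (auto simp: G_def gap_def lipschitz)
  finally have dV: "\<bar>V (Suc (Suc n)) r - V (Suc n) r\<bar> \<le> L * integral {0..r} (gap n)"
    by simp
  show ?thesis
    using dU dV by (simp add: gap_def distrib_right)
qed

lemma L_nonneg: "L \<ge> 0"
  using lipschitz[of 1 0 0 0] by simp

lemma B_nonneg: "B \<ge> 0"
  using bounded[of 0 0] by linarith

lemma gap_le:
  assumes "0 \<le> r" "r \<le> T"
  shows "gap n r \<le> B * T * ((1 + L) * r) ^ n / fact n"
  using assms
proof (induction n arbitrary: r)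
  case 0
  have "gap 0 r = \<bar>radial_primitive N (G 0) r\<bar>"
    by (simp add: gap_def U_Suc V_Suc U_0 V_0)
  also have "\<dots> \<le> integral {0..r} (\<lambda>s. \<bar>G 0 s\<bar>)"
    using 0 by (intro abs_radial_primitive_le continuous_on_G) simp
  also have "\<dots> \<le> integral {0..r} (\<lambda>_. B)"
    by (intro integral_le integrable_on_Icc_if_continuous_on_Ici continuous_intros continuous_on_G)
      (auto simp: G_def bounded)
  also have "\<dots> \<le> B * T"
    using 0 B_nonneg by (simp add: mult.commute mult_left_mono)
  finally show ?case by simp
next
  case (Suc n)
  let ?K = "1 + L"
  have "gap (Suc n) r \<le> ?K * integral {0..r} (gap n)"
    using Suc.prems by (intro gap_Suc_le) simp
  also have "\<dots> \<le> ?K * integral {0..r} (\<lambda>s. B * T * ?K ^ n / fact n * s ^ n)"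
    using Suc L_nonneg continuous_on_gap
    by (intro mult_left_mono integral_le integrable_on_Icc_if_continuous_on_Ici continuous_intros)
      (auto simp: power_mult_distrib mult.assoc)
  also have "\<dots> = ?K * (B * T * ?K ^ n / fact n) * (r ^ Suc n / Suc n)"
    using integral_unique[OF has_integral_power_Icc0[OF Suc.prems(1), of n]] by (simp add: mult_ac)
  also have "\<dots> = B * T * (?K * r) ^ Suc n / fact (Suc n)"
    by (simp add: power_mult_distrib mult_ac)
  finally show ?case .
qed

lemma gap_le_uniform:
  assumes "r \<in> {0..T}"
  shows "gap n r \<le> B * T * ((1 + L) * T) ^ n / fact n"
proof -
  have "((1 + L) * r) ^ n \<le> ((1 + L) * T) ^ n"
    using assms L_nonneg by (intro power_mono mult_left_mono) auto
  then have "B * T * ((1 + L) * r) ^ n / fact n \<le> B * T * ((1 + L) * T) ^ n / fact n"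
    using assms B_nonneg by (intro divide_right_mono mult_left_mono) auto
  with gap_le[of r T n] assms show ?thesis by simp
qed

lemma uniform_limit_telescope:
  assumes "\<And>n r. r \<in> {0..T} \<Longrightarrow> \<bar>W (Suc n) r - W n r\<bar> \<le> gap n r"
  shows "uniform_limit {0..T} W (\<lambda>r. W 0 r + (\<Sum>i. W (Suc i) r - W i r)) sequentially"
proof -
  have summable: "summable (\<lambda>n. B * T * ((1 + L) * T) ^ n / fact n)"
    using summable_mult[OF summable_exp[of "(1 + L) * T"], of "B * T"] by (simp add: field_simps)
  have "uniform_limit {0..T} (\<lambda>n r. \<Sum>i<n. W (Suc i) r - W i r)
      (\<lambda>r. \<Sum>i. W (Suc i) r - W i r) sequentially"
  proof (rule Weierstrass_m_test[OF _ summable])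
    fix n r assume "r \<in> {0..T}"
    then show "norm (W (Suc n) r - W n r) \<le> B * T * ((1 + L) * T) ^ n / fact n"
      using assms[of r n] gap_le_uniform[of r T n] by simp
  qed
  moreover have "W 0 r + (\<Sum>i<n. W (Suc i) r - W i r) = W n r" for n r
    by (simp add: sum_lessThan_telescope[of "\<lambda>i. W i r"])
  ultimately show ?thesis
    using uniform_limit_add[OF uniform_limit_const[of "W 0"]] by fastforce
qed

definition "u_lim r = U 0 r + (\<Sum>i. U (Suc i) r - U i r)"
definition "v_lim r = V 0 r + (\<Sum>i. V (Suc i) r - V i r)"
definition "g_lim s = F (u_lim s) (v_lim s)"

lemma uniform_limit_U: "uniform_limit {0..T} U u_lim sequentially"
  unfolding u_lim_def[abs_def] by (rule uniform_limit_telescope) (simp add: gap_def)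

lemma uniform_limit_V: "uniform_limit {0..T} V v_lim sequentially"
  unfolding v_lim_def[abs_def] by (rule uniform_limit_telescope) (simp add: gap_def)

lemma continuous_on_u_lim: "continuous_on {0..} u_lim"
  by (rule continuous_on_Ici_if_Icc, rule uniform_limit_theorem[OF _ uniform_limit_U])
    (use continuous_on_U_V in \<open>auto intro!: always_eventually continuous_on_Icc_if_Ici\<close>)

lemma continuous_on_v_lim: "continuous_on {0..} v_lim"
  by (rule continuous_on_Ici_if_Icc, rule uniform_limit_theorem[OF _ uniform_limit_V])
    (use continuous_on_U_V in \<open>auto intro!: always_eventually continuous_on_Icc_if_Ici\<close>)

lemma continuous_on_g_lim: "continuous_on {0..} g_lim"
  unfolding g_lim_def[abs_def] by (intro continuous_on_lipschitz2_compose[OF lipschitz] continuous_on_u_lim continuous_on_v_lim)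

lemma uniform_limit_G: "uniform_limit {0..T} G g_lim sequentially"
proof (rule uniform_limitI)
  fix e :: real assume "e > 0"
  define d where "d = e / (2 * (L + 1))"
  have d: "d > 0" "L * (2 * d) < e"
    using \<open>e > 0\<close> L_nonneg by (auto simp: d_def field_simps)
  have "\<forall>\<^sub>F n in sequentially. (\<forall>x\<in>{0..T}. dist (U n x) (u_lim x) < d) \<and> (\<forall>x\<in>{0..T}. dist (V n x) (v_lim x) < d)"
    using uniform_limitD[OF uniform_limit_U d(1)] uniform_limitD[OF uniform_limit_V d(1)]
    by (rule eventually_conj)
  then show "\<forall>\<^sub>F n in sequentially. \<forall>x\<in>{0..T}. dist (G n x) (g_lim x) < e"
  proof eventually_elim
    case (elim n)
    show ?case
    proof
      fix x assume "x \<in> {0..T}"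
      then have "\<bar>U n x - u_lim x\<bar> + \<bar>V n x - v_lim x\<bar> \<le> 2 * d"
        using elim by (fastforce simp: dist_real_def)
      have "\<bar>G n x - g_lim x\<bar> \<le> L * (\<bar>U n x - u_lim x\<bar> + \<bar>V n x - v_lim x\<bar>)"
        unfolding G_def g_lim_def by (rule lipschitz)
      also have "\<dots> \<le> L * (2 * d)"
        by (rule mult_left_mono[OF _ L_nonneg]) fact
      finally show "dist (G n x) (g_lim x) < e"
        using d by (simp add: dist_real_def)
    qed
  qed
qed

lemma u_lim_eq_integral:
  assumes r: "0 \<le> r"
  shows "u_lim r = u0 + integral {0..r} v_lim"
proof -
  obtain I J where I: "\<And>n. (V n has_integral I n) {0..r}" and J: "(v_lim has_integral J) {0..r}"
    and IJ: "I \<longlonglongrightarrow> J"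
    using uniform_limit_integral[OF uniform_limit_V[of r] _ sequentially_bot]
      continuous_on_U_V continuous_on_Icc_if_Ici by blast
  have "(\<lambda>n. U (Suc n) r) \<longlonglongrightarrow> u_lim r"
    using tendsto_uniform_limitI[OF uniform_limit_U[of r]] r by (auto intro: LIMSEQ_Suc)
  moreover have "(\<lambda>n. U (Suc n) r) = (\<lambda>n. u0 + I n)"
    using I by (auto simp: U_Suc integral_unique)
  ultimately have "u_lim r = u0 + J"
    using IJ by (metis LIMSEQ_unique tendsto_add_const_iff)
  then show ?thesis using J by (simp add: integral_unique)
qed

lemma v_lim_eq_radial_primitive:
  assumes r: "0 \<le> r"
  shows "v_lim r = - radial_primitive N g_lim r"
proof -
  have lim: "uniform_limit {0..r} (\<lambda>n s. s ^ (N - 1) * G n s) (\<lambda>s. s ^ (N - 1) * g_lim s) sequentially"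
  proof (rule uniform_lim_mult[OF uniform_limit_const uniform_limit_G])
    show "bounded ((\<lambda>s. s ^ (N - 1)) ` {0..r})" "bounded (g_lim ` {0..r})"
      using continuous_on_g_lim
      by (auto intro!: compact_imp_bounded compact_continuous_image continuous_intros
          continuous_on_Icc_if_Ici)
  qed
  have cont: "continuous_on {0..r} (\<lambda>s. s ^ (N - 1) * G n s)" for n
    by (intro continuous_intros continuous_on_Icc_if_Ici continuous_on_G)
  obtain I J where I: "\<And>n. ((\<lambda>s. s ^ (N - 1) * G n s) has_integral I n) {0..r}"
    and J: "((\<lambda>s. s ^ (N - 1) * g_lim s) has_integral J) {0..r}" and IJ: "I \<longlonglongrightarrow> J"
    using uniform_limit_integral[OF lim cont sequentially_bot] by blast
  have "(\<lambda>n. V (Suc n) r) \<longlonglongrightarrow> v_lim r"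
    using tendsto_uniform_limitI[OF uniform_limit_V[of r]] r by (auto intro: LIMSEQ_Suc)
  moreover have "(\<lambda>n. V (Suc n) r) = (\<lambda>n. - (I n / r ^ (N - 1)))"
    using I by (auto simp: V_Suc radial_primitive_def integral_unique)
  moreover have "(\<lambda>n. - (I n / r ^ (N - 1))) \<longlonglongrightarrow> - (J / r ^ (N - 1))"
    unfolding divide_inverse by (intro tendsto_minus tendsto_mult[OF IJ tendsto_const])
  ultimately have "v_lim r = - (J / r ^ (N - 1))"
    by (metis LIMSEQ_unique)
  then show ?thesis using J by (simp add: integral_unique radial_primitive_def)
qed

theorem radial_solution_exists: "radial_solution N F u0 u_lim v_lim"
proof
  show "N \<ge> 1" by (rule N_ge_1)
  show u0: "u_lim 0 = u0" using u_lim_eq_integral[of 0] by simp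
  show v0: "v_lim 0 = 0" using v_lim_eq_radial_primitive[of 0] by simp
  fix r :: real
  show "(u_lim has_real_derivative v_lim r) (at r within {0..})" if r: "r \<ge> 0"
  proof -
    have "((\<lambda>x. u0 + integral {0..x} v_lim) has_real_derivative v_lim r) (at r within {0..})"
      using DERIV_add[OF DERIV_const has_real_derivative_integral_Ici[OF continuous_on_v_lim r]]
      by simp
    then show ?thesis
      by (rule has_field_derivative_transform_within[where d = 1]) (use r u_lim_eq_integral in auto)
  qed
  show "(v_lim has_real_derivative - F (u_lim r) (v_lim r) - (real N - 1) / r * v_lim r) (at r)"
    if r: "r > 0"
  proof (rule has_field_derivative_transform_within_open[where S = "{0<..}"])
    show "((\<lambda>x. - radial_primitive N g_lim x) has_real_derivative
        - F (u_lim r) (v_lim r) - (real N - 1) / r * v_lim r) (at r)"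
      using DERIV_minus[OF has_real_derivative_radial_primitive[OF continuous_on_g_lim r, of N]]
        v_lim_eq_radial_primitive[of r] r N_ge_1
      by (simp add: g_lim_def of_nat_diff algebra_simps)
  qed (use r v_lim_eq_radial_primitive in auto)
  show "(v_lim has_real_derivative - F u0 0 / N) (at 0 within {0..})"
  proof -
    have "((\<lambda>x. - radial_primitive N g_lim x) has_real_derivative - F u0 0 / N) (at 0 within {0..})"
      using DERIV_minus[OF has_real_derivative_radial_primitive_0[OF continuous_on_g_lim N_ge_1]]
        u0 v0 by (simp add: g_lim_def)
    then show ?thesis
      by (rule has_field_derivative_transform_within[where d = 1]) (use v_lim_eq_radial_primitive in auto)
  qed
qed

end

section \<open>A truncated nonlinearity\<close>

lemma clamp_real_eq: "a \<le> b \<Longrightarrow> clamp a b x = max a (min b (x :: real))"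
  unfolding clamp_def Basis_real_def by auto

lemma abs_clamp_diff_le: "a \<le> b \<Longrightarrow> \<bar>clamp a b x - clamp a b y\<bar> \<le> \<bar>x - (y :: real)\<bar>"
  by (simp add: clamp_real_eq)

text \<open>On \<open>0 \<le> u \<le> 1\<close>, \<open>|u'| \<le> 2\<close> this is the right-hand side of (E); truncating makes it
  bounded and globally Lipschitz, so Picard iteration gives a solution on all of \<open>[0,\<infinity>)\<close>.\<close>
definition truncated_source :: "real \<Rightarrow> real \<Rightarrow> real \<Rightarrow> real \<Rightarrow> real" where
  "truncated_source p M a b = clamp 0 1 a powr p + M * \<bar>clamp (-2) 2 b\<bar> powr (2 * p / (p + 1))"

lemma truncated_source_eq:
  "0 \<le> a \<Longrightarrow> a \<le> 1 \<Longrightarrow> \<bar>b\<bar> \<le> 2 \<Longrightarrow>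
    truncated_source p M a b = a powr p + M * \<bar>b\<bar> powr (2 * p / (p + 1))"
  by (simp add: truncated_source_def clamp_real_eq)

lemma truncated_source_lipschitz:
  assumes p: "p \<ge> 1"
  shows "\<exists>L. \<forall>a b c d. \<bar>truncated_source p M a b - truncated_source p M c d\<bar> \<le> L * (\<bar>a - c\<bar> + \<bar>b - d\<bar>)"
proof (intro exI allI)
  define q where "q = 2 * p / (p + 1)"
  have q: "q \<ge> 1" using p by (simp add: q_def field_simps)
  define L where "L = max p (\<bar>M\<bar> * q * 2 powr (q - 1))"
  fix a b c d :: real
  let ?a = "clamp 0 1 a" and ?c = "clamp 0 1 c" and ?b = "\<bar>clamp (-2) 2 b\<bar>" and ?d = "\<bar>clamp (-2) 2 d\<bar>"
  have "\<bar>?a powr p - ?c powr p\<bar> \<le> p * 1 powr (p - 1) * \<bar>?a - ?c\<bar>"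
    using p by (intro abs_powr_diff_le) (auto simp: clamp_real_eq)
  also have "\<dots> \<le> L * \<bar>a - c\<bar>"
    using abs_clamp_diff_le[of 0 1 a c] p by (intro mult_mono) (auto simp: L_def)
  finally have ac: "\<bar>?a powr p - ?c powr p\<bar> \<le> L * \<bar>a - c\<bar>" .
  have "\<bar>M\<bar> * \<bar>?b powr q - ?d powr q\<bar> \<le> \<bar>M\<bar> * (q * 2 powr (q - 1) * \<bar>?b - ?d\<bar>)"
    using q by (intro mult_left_mono abs_powr_diff_le) (auto simp: clamp_real_eq)
  also have "\<dots> \<le> \<bar>M\<bar> * (q * 2 powr (q - 1) * \<bar>b - d\<bar>)"
    using abs_clamp_diff_le[of "-2" 2 b d] q by (intro mult_left_mono) auto
  also have "\<dots> \<le> L * \<bar>b - d\<bar>"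
    by (simp add: L_def mult.assoc[symmetric] mult_right_mono)
  finally have bd: "\<bar>M\<bar> * \<bar>?b powr q - ?d powr q\<bar> \<le> L * \<bar>b - d\<bar>" .
  have "truncated_source p M a b - truncated_source p M c d
      = (?a powr p - ?c powr p) + M * (?b powr q - ?d powr q)"
    unfolding truncated_source_def q_def by (simp add: algebra_simps)
  then have "\<bar>truncated_source p M a b - truncated_source p M c d\<bar>
      \<le> \<bar>?a powr p - ?c powr p\<bar> + \<bar>M\<bar> * \<bar>?b powr q - ?d powr q\<bar>"
    by (metis abs_triangle_ineq abs_mult)
  with ac bd show "\<bar>truncated_source p M a b - truncated_source p M c d\<bar> \<le> L * (\<bar>a - c\<bar> + \<bar>b - d\<bar>)"
    unfolding distrib_left by linarith
qed

lemma truncated_source_bounded: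
  assumes p: "p \<ge> 1"
  shows "\<exists>B. \<forall>a b. \<bar>truncated_source p M a b\<bar> \<le> B"
proof (intro exI allI)
  fix a b :: real
  have "clamp 0 1 a powr p \<le> 1"
    using p by (intro powr_le1) (auto simp: clamp_real_eq)
  moreover have "\<bar>M\<bar> * \<bar>clamp (-2) 2 b\<bar> powr (2 * p / (p + 1)) \<le> \<bar>M\<bar> * 2 powr (2 * p / (p + 1))"
    using p by (intro mult_left_mono powr_mono2) (auto simp: clamp_real_eq)
  moreover have "\<bar>truncated_source p M a b\<bar>
      \<le> \<bar>clamp 0 1 a powr p\<bar> + \<bar>M\<bar> * \<bar>clamp (-2) 2 b\<bar> powr (2 * p / (p + 1))"
    unfolding truncated_source_def by (metis abs_triangle_ineq abs_mult powr_ge_zero abs_of_nonneg)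
  ultimately show "\<bar>truncated_source p M a b\<bar> \<le> 1 + \<bar>M\<bar> * 2 powr (2 * p / (p + 1))"
    by simp
qed

lemma truncated_radial_solution_exists:
  assumes "p \<ge> 1" "N \<ge> 1"
  shows "\<exists>u v. radial_solution N (truncated_source p M) 1 u v"
proof -
  obtain L B where "\<And>a b c d. \<bar>truncated_source p M a b - truncated_source p M c d\<bar> \<le> L * (\<bar>a - c\<bar> + \<bar>b - d\<bar>)"
    and "\<And>a b. \<bar>truncated_source p M a b\<bar> \<le> B"
    using truncated_source_lipschitz[OF assms(1)] truncated_source_bounded[OF assms(1)] by metis
  then interpret radial_lipschitz_ivp N "truncated_source p M" 1 L B
    using assms(2) by unfold_locales
  from radial_solution_exists show ?thesis by blast
qed

section \<open>The threshold \<open>\<mu>\<^sup>*(1)\<close> and the zeros of \<open>PhiM\<close>\<close>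

lemma mu_star1_mult_powr: "p > 0 \<Longrightarrow> mu_star1 p * (2 * p / (p + 1)) powr (p / (p + 1)) = p + 1"
proof -
  assume p: "p > 0"
  have "((p + 1) / (2 * p)) powr (p / (p + 1)) * (2 * p / (p + 1)) powr (p / (p + 1)) = 1"
    using p by (simp flip: powr_mult)
  then show ?thesis
    unfolding mu_star1_def by (simp add: mult.assoc)
qed

text \<open>On the curve \<open>W\<^sup>2 = q U\<^sup>p\<^sup>+\<^sup>1\<close> the source term \<open>(p+1) U\<^sup>p + M W\<^sup>q\<close> has the sign of \<open>M + \<mu>\<^sup>*(1)\<close>;
  this is where the threshold \<open>\<mu>\<^sup>*(1)\<close> comes from.\<close>
lemma source_on_boundary_curve:
  fixes p M U W :: real
  assumes p: "p > 0" and "U > 0" "W \<ge> 0" and W: "W\<^sup>2 = 2 * p / (p + 1) * U powr (p + 1)"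
  shows "(p + 1) * U powr p + M * W powr (2 * p / (p + 1))
    = (M + mu_star1 p) * (2 * p / (p + 1)) powr (p / (p + 1)) * U powr p"
proof -
  define q s where "q = 2 * p / (p + 1)" and "s = p / (p + 1)"
  have "q \<ge> 0" using p by (simp add: q_def)
  have "W powr q = (W powr 2) powr s"
    by (simp add: powr_powr q_def s_def)
  also have "\<dots> = (q * U powr (p + 1)) powr s"
    using assms by (simp add: W q_def)
  also have "\<dots> = q powr s * U powr ((p + 1) * s)"
    using \<open>q \<ge> 0\<close> by (simp add: powr_mult powr_powr)
  also have "(p + 1) * s = p"
    using p by (simp add: s_def)
  finally show ?thesis
    unfolding q_def s_def
    using mu_star1_mult_powr[OF p] by (simp add: algebra_simps)
qed

lemma PhiM_rescaled:
  fixes p M X :: real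
  assumes p: "p > 1" and X: "X > 0"
  defines "Z \<equiv> (2 / (p - 1))\<^sup>2 * X powr (1 - p)"
  shows "X powr (1 - p) * PhiM N p M X = 1 + M * Z powr (p / (p + 1)) - Kc N p * (p - 1) / 2 * Z"
proof -
  define a s where "a = 2 / (p - 1)" and "s = p / (p + 1)"
  have a: "a > 0" using p by (simp add: a_def)
  have Z: "Z = a\<^sup>2 * X powr (1 - p)"
    by (simp add: Z_def a_def)
  have t1: "X powr (1 - p) * X powr (p - 1) = 1"
    using X by (simp flip: powr_add)
  have t2: "X powr (1 - p) * X powr ((p - 1) / (p + 1)) = X powr ((1 - p) * s)"
  proof -
    have "(1 - p) + (p - 1) / (p + 1) = (1 - p) * s"
      using p by (simp add: s_def field_simps)
    then show ?thesis using X by (simp flip: powr_add)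
  qed
  have t3: "Z powr s = a powr (2 * p / (p + 1)) * X powr ((1 - p) * s)"
  proof -
    have "Z powr s = (a powr 2) powr s * (X powr (1 - p)) powr s"
      using a by (simp add: Z powr_mult)
    also have "\<dots> = a powr (2 * p / (p + 1)) * X powr ((1 - p) * s)"
      by (simp add: powr_powr s_def)
    finally show ?thesis .
  qed
  have t4: "Kc N p * (p - 1) / 2 * a\<^sup>2 = 2 * Kc N p / (p - 1)"
  proof -
    obtain d where d: "p - 1 = d" "d > 0"
      using p by simp
    show ?thesis
      unfolding a_def d(1) using d(2) by (simp add: power2_eq_square field_simps)
  qed
  have "X powr (1 - p) * PhiM N p M X = X powr (1 - p) * X powr (p - 1)
      + M * a powr (2 * p / (p + 1)) * (X powr (1 - p) * X powr ((p - 1) / (p + 1)))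
      - 2 * Kc N p / (p - 1) * X powr (1 - p)"
    unfolding PhiM_def a_def[symmetric] by (simp add: algebra_simps)
  also have "\<dots> = 1 + M * a powr (2 * p / (p + 1)) * X powr ((1 - p) * s)
      - (Kc N p * (p - 1) / 2 * a\<^sup>2) * X powr (1 - p)"
    by (simp only: t1 t2 t4)
  also have "\<dots> = 1 + M * Z powr s - Kc N p * (p - 1) / 2 * Z"
    unfolding t3 by (simp add: Z algebra_simps)
  finally show ?thesis
    by (simp add: s_def)
qed

lemma rescaled_PhiM_at_q_neg:
  fixes p M :: real
  assumes p: "p > 1" and N: "N \<ge> 1" and M: "M \<le> - mu_star1 p" and M1: "N = 1 \<Longrightarrow> M < - mu_star1 p"
  defines "q \<equiv> 2 * p / (p + 1)"
  shows "1 + M * q powr (p / (p + 1)) - Kc N p * (p - 1) / 2 * q < 0"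
proof -
  have mq: "mu_star1 p * q powr (p / (p + 1)) = p + 1"
    using mu_star1_mult_powr[of p] p by (simp add: q_def)
  have qs: "q powr (p / (p + 1)) > 0"
    using p by (simp add: q_def)
  have M_le: "M * q powr (p / (p + 1)) \<le> - (p + 1)"
    using mult_right_mono[OF M, of "q powr (p / (p + 1))"] qs mq by simp
  have M_less: "M * q powr (p / (p + 1)) < - (p + 1)" if "N = 1"
    using mult_strict_right_mono[OF M1[OF that] qs] mq by simp
  have "Kc N p * (p - 1) / 2 = ((real N - 2) * p - real N) / 2"
    using p by (simp add: Kc_def)
  moreover have "- p - ((real N - 2) * p - real N) / 2 * q = - (p * (real N - 1) * (p - 1) / (p + 1))"
    using p by (simp add: q_def field_simps)
  ultimately have eq: "- p - Kc N p * (p - 1) / 2 * q = - (p * (real N - 1) * (p - 1) / (p + 1))"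
    by simp
  show ?thesis
  proof (cases "N = 1")
    case True
    have "0 \<le> p * (real N - 1) * (p - 1) / (p + 1)"
      using p N by (intro divide_nonneg_pos mult_nonneg_nonneg) auto
    then show ?thesis using eq M_less[OF True] by linarith
  next
    case False
    then have "0 < p * (real N - 1) * (p - 1) / (p + 1)"
      using p N by (intro divide_pos_pos mult_pos_pos) auto
    then show ?thesis using eq M_le by linarith
  qed
qed

text \<open>With \<open>Z = a\<^sup>2 X\<^sup>1\<^sup>-\<^sup>p\<close> the zeros of \<open>PhiM\<close> are the zeros of \<open>g(Z) = 1 + M Z\<^sup>s - c Z\<close>, which is convex
  because \<open>M \<le> 0\<close>. As \<open>g(q) < 0\<close> and \<open>g\<close> vanishes at \<open>Z\<^sub>2 < Z\<^sub>1\<close>, convexity forces \<open>Z\<^sub>1 > q\<close>: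
  the point \<open>P\<^sub>1\<^sub>,\<^sub>M\<close> lies strictly above the curve \<open>y\<^sup>2 = q x\<^sup>p\<^sup>+\<^sup>1\<close>.\<close>
lemma PhiM_smaller_zero_above_curve:
  fixes p M X1 X2 :: real
  assumes p: "p > 1" and N: "N \<ge> 1" and M: "M \<le> - mu_star1 p" and M1: "N = 1 \<Longrightarrow> M < - mu_star1 p"
    and X: "0 < X1" "X1 < X2" "PhiM N p M X1 = 0" "PhiM N p M X2 = 0"
  shows "2 * p / (p + 1) * X1 powr (p + 1) < (2 / (p - 1) * X1)\<^sup>2"
proof -
  define a s c q where "a = 2 / (p - 1)" and "s = p / (p + 1)"
    and "c = Kc N p * (p - 1) / 2" and "q = 2 * p / (p + 1)"
  define g where "g Z = 1 + M * Z powr s - c * Z" for Z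
  define Z1 Z2 where "Z1 = a\<^sup>2 * X1 powr (1 - p)" and "Z2 = a\<^sup>2 * X2 powr (1 - p)"
  have a: "a > 0" and s: "0 < s" "s < 1" and q: "q > 0"
    using p by (auto simp: a_def s_def q_def)
  have "g Z1 = 0" "g Z2 = 0"
    using PhiM_rescaled[OF p, of X1 N M] PhiM_rescaled[OF p, of X2 N M] X
    by (simp_all add: g_def Z1_def Z2_def a_def s_def c_def)
  have Z: "0 < Z2" "Z2 < Z1"
    using a X p by (auto simp: Z1_def Z2_def intro!: powr_less_mono2_neg)
  have "mu_star1 p > 0"
    using p by (simp add: mu_star1_def)
  then have "M \<le> 0"
    using M by simp
  define E where "E = M * (s * Z1 powr (s - 1)) - c"
  have tangent: "g Z \<ge> g Z1 + E * (Z - Z1)" if "Z > 0" for Z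
    using mult_left_mono_neg[OF powr_le_tangent[OF s that, of Z1] \<open>M \<le> 0\<close>] Z
    by (simp add: g_def E_def algebra_simps)
  have "E \<ge> 0"
    using tangent[of Z2] Z \<open>g Z1 = 0\<close> \<open>g Z2 = 0\<close> by (simp add: mult_le_0_iff)
  have "g q < 0"
    using rescaled_PhiM_at_q_neg[OF p N M M1] by (simp add: g_def s_def c_def q_def)
  have "q < Z1"
  proof (rule ccontr)
    assume "\<not> q < Z1"
    then have "0 \<le> E * (q - Z1)"
      using \<open>E \<ge> 0\<close> by simp
    then show False
      using tangent[OF q] \<open>g Z1 = 0\<close> \<open>g q < 0\<close> by linarith
  qed
  moreover have "X1 powr (1 - p) = X1\<^sup>2 / X1 powr (p + 1)"
    using X(1) powr_diff[of X1 2 "p + 1"] by simp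
  then have "Z1 = (a * X1)\<^sup>2 / X1 powr (p + 1)"
    by (simp add: Z1_def power_mult_distrib)
  ultimately show ?thesis
    using X(1) by (simp add: a_def q_def pos_less_divide_eq)
qed

section \<open>The ground state\<close>

locale truncated_radial_solution = radial_solution N "truncated_source p M" 1 u v for N p M u v +
  assumes p_gt_1: "p > 1" and M_le: "M \<le> - mu_star1 p" and M_less_if_N_1: "N = 1 \<Longrightarrow> M < - mu_star1 p"
begin

definition "q = 2 * p / (p + 1)"

lemma q_gt_1: "1 < q" and q_lt_2: "q < 2"
  using p_gt_1 by (auto simp: q_def field_simps)

lemma truncated_source_1_0: "truncated_source p M 1 0 = 1"
  by (simp add: truncated_source_def clamp_real_eq)

definition in_region :: "real \<Rightarrow> bool" where
  "in_region r \<longleftrightarrow> 0 < u r \<and> v r < 0 \<and> (v r)\<^sup>2 < q * u r powr (p + 1)"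

lemma eventually_in_region_at_right_0: "eventually in_region (at_right 0)"
proof -
  have "eventually (\<lambda>y. v y / y < 0) (at_right 0)"
    using order_tendstoD(2)[OF v_div_tendsto, of 0] N_ge_1 by (simp add: truncated_source_1_0)
  moreover have "eventually (\<lambda>y. 0 < y) (at_right (0::real))"
    by (rule eventually_at_right_less)
  moreover have "(u \<longlongrightarrow> u 0) (at 0 within {0..})" "(v \<longlongrightarrow> v 0) (at 0 within {0..})"
    using continuous_on_u continuous_on_v unfolding continuous_on_def by auto
  then have u: "(u \<longlongrightarrow> 1) (at_right 0)" and v: "(v \<longlongrightarrow> 0) (at_right 0)"
    by (simp_all add: u_0 v_0 at_within_Ici_at_right)
  then have "eventually (\<lambda>y. 0 < u y) (at_right 0)"
    using order_tendstoD(1)[OF u, of 0] by simp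
  moreover have "((\<lambda>y. q * u y powr (p + 1) - (v y)\<^sup>2) \<longlongrightarrow> q * 1 powr (p + 1) - 0\<^sup>2) (at_right 0)"
    by (intro tendsto_intros u v) auto
  then have "eventually (\<lambda>y. 0 < q * u y powr (p + 1) - (v y)\<^sup>2) (at_right 0)"
    using q_gt_1 by (intro order_tendstoD(1)) auto
  ultimately show ?thesis
    by eventually_elim (auto simp: in_region_def divide_less_0_iff)
qed

lemma eventually_in_region_at:
  assumes r: "r > 0" and "in_region r"
  shows "eventually in_region (at r)"
proof -
  have u: "(u \<longlongrightarrow> u r) (at r)" and v: "(v \<longlongrightarrow> v r) (at r)"
    using isCont_u[OF r] isCont_v[OF r] by (auto simp: isCont_def)
  have "((\<lambda>y. q * u y powr (p + 1) - (v y)\<^sup>2) \<longlongrightarrow> q * u r powr (p + 1) - (v r)\<^sup>2) (at r)"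
    using \<open>in_region r\<close> by (intro tendsto_intros u v) (auto simp: in_region_def)
  then have "eventually (\<lambda>y. 0 < q * u y powr (p + 1) - (v y)\<^sup>2) (at r)"
    using \<open>in_region r\<close> by (intro order_tendstoD(1)) (auto simp: in_region_def)
  moreover have "eventually (\<lambda>y. 0 < u y) (at r)" "eventually (\<lambda>y. v y < 0) (at r)"
    using order_tendstoD(1)[OF u, of 0] order_tendstoD(2)[OF v, of 0] \<open>in_region r\<close>
    by (auto simp: in_region_def)
  ultimately show ?thesis
    by eventually_elim (simp add: in_region_def)
qed

lemma boundary_derivative_pos:
  assumes r: "r > 0" and U: "U > 0" and W: "W > 0" and WU: "W\<^sup>2 = q * U powr (p + 1)"
  shows "0 < q * ((p + 1) * U powr p * (- W))
              - 2 * (- W) * (- (U powr p + M * W powr q) - (real N - 1) / r * (- W))"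
proof -
  define c where "c = (M + mu_star1 p) * q powr (p / (p + 1))"
  have "q * (p + 1) = 2 * p"
    using p_gt_1 by (simp add: q_def)
  then have "q * ((p + 1) * U powr p * (- W)) = - 2 * p * U powr p * W"
    by (metis mult.assoc mult.commute mult_minus_left)
  then have "q * ((p + 1) * U powr p * (- W)) - 2 * (- W) * (- (U powr p + M * W powr q) - (real N - 1) / r * (- W))
      = - 2 * W * ((p + 1) * U powr p + M * W powr q) + 2 * (real N - 1) / r * W\<^sup>2"
    by (simp add: algebra_simps power2_eq_square)
  also have "(p + 1) * U powr p + M * W powr q = c * U powr p"
    using source_on_boundary_curve[of p U W M] p_gt_1 U W WU by (simp add: c_def q_def)
  finally have eq: "q * ((p + 1) * U powr p * (- W)) - 2 * (- W) * (- (U powr p + M * W powr q) - (real N - 1) / r * (- W))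
      = - 2 * W * (c * U powr p) + 2 * (real N - 1) / r * W\<^sup>2" .
  have "c \<le> 0" and c_neg: "N = 1 \<Longrightarrow> c < 0"
    using M_le M_less_if_N_1 q_gt_1 by (auto simp: c_def mult_le_0_iff mult_less_0_iff)
  then have "W * (c * U powr p) \<le> 0"
    using U W by (simp add: mult_nonneg_nonpos mult_nonpos_nonneg)
  moreover have "W * (c * U powr p) < 0" if "N = 1"
    using U W c_neg[OF that] by (simp add: mult_pos_neg mult_neg_pos)
  moreover have "0 \<le> 2 * (real N - 1) / r * W\<^sup>2" and "N \<noteq> 1 \<Longrightarrow> 0 < 2 * (real N - 1) / r * W\<^sup>2"
    using N_ge_1 r W by auto
  ultimately show ?thesis
    unfolding eq by (cases "N = 1") linarith+
qed

text \<open>The closedness step of the continuous induction: a solution that stays in the region on \<open>(0, r)\<close>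
  is still in it at \<open>r\<close>.\<close>
context
  fixes r :: real
  assumes r: "r > 0" and before: "\<And>s. 0 < s \<Longrightarrow> s < r \<Longrightarrow> in_region s"
begin

lemma eventually_in_region_at_left: "eventually in_region (at_left r)"
  unfolding eventually_at_left_field using r before by (intro exI[of _ 0]) auto

lemma tendsto_u_at_left: "(u \<longlongrightarrow> u r) (at_left r)"
  and tendsto_v_at_left: "(v \<longlongrightarrow> v r) (at_left r)"
  using isCont_u[OF r] isCont_v[OF r] by (auto simp: isCont_def intro: tendsto_within_subset)

lemma u_le_1_before:
  assumes "0 \<le> s" "s \<le> r"
  shows "u s \<le> 1"
proof (rule u_le_u0[OF assms(1)])
  fix t assume "0 < t" "t < s"
  then show "v t \<le> 0"
    using before[of t] assms by (simp add: in_region_def)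
qed

lemma abs_v_le_before: "0 < s \<Longrightarrow> s < r \<Longrightarrow> \<bar>v s\<bar> \<le> 2 * u s"
  using before[of s] u_le_1_before[of s] p_gt_1 q_lt_2
  by (intro abs_le_twice_if_square_le_powr[of _ p q]) (auto simp: in_region_def)

lemma v_nonpos_limit: "v r \<le> 0"
  by (rule tendsto_upperbound[OF tendsto_v_at_left])
    (use eventually_in_region_at_left in \<open>auto elim: eventually_mono simp: in_region_def\<close>)

text \<open>\<open>|u'| \<le> 2 u\<close> makes \<open>u(s) e\<^sup>2\<^sup>s\<close> nondecreasing, so \<open>u\<close> cannot reach \<open>0\<close> in finite time.\<close>
lemma u_pos_limit: "u r > 0"
proof -
  define f where "f s = u s * exp (2 * s)" for s
  have "f (r / 2) \<le> f r"
  proof (rule DERIV_nonneg_imp_increasing_open[of "r / 2" r f])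
    show "continuous_on {r / 2..r} f"
      unfolding f_def using r by (intro continuous_intros continuous_on_subset[OF continuous_on_u]) auto
    fix s assume s: "r / 2 < s" "s < r"
    then have "(f has_real_derivative exp (2 * s) * (v s + 2 * u s)) (at s)"
      unfolding f_def[abs_def] using r
      by (auto intro!: derivative_eq_intros u_deriv_at simp: algebra_simps)
    moreover have "v s + 2 * u s \<ge> 0"
      using abs_v_le_before[of s] s r by linarith
    ultimately show "\<exists>y. (f has_real_derivative y) (at s) \<and> 0 \<le> y"
      by auto
  qed (use r in simp)
  moreover have "f (r / 2) > 0"
    using before[of "r / 2"] r by (simp add: f_def in_region_def)
  ultimately have "0 < u r * exp (2 * r)"
    unfolding f_def by linarith
  then show ?thesis
    by (simp add: zero_less_mult_iff)
qed

lemma v_neg_limit: "v r < 0"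
proof (rule ccontr)
  assume "\<not> v r < 0"
  then have "v r = 0" using v_nonpos_limit by simp
  have "truncated_source p M (u r) 0 > 0"
    using u_pos_limit by (simp add: truncated_source_def clamp_real_eq)
  then have "eventually (\<lambda>y. v r < v y) (at_left r)"
    using v_deriv[OF r] \<open>v r = 0\<close> by (intro eventually_at_left_greater_if_deriv_neg) auto
  with eventually_in_region_at_left have "eventually (\<lambda>y. False) (at_left r)"
    by eventually_elim (simp add: in_region_def \<open>v r = 0\<close>)
  then show False by simp
qed

lemma region_strict_limit: "(v r)\<^sup>2 < q * u r powr (p + 1)"
proof -
  define H where "H y = q * u y powr (p + 1) - v y * v y" for y
  have "(H \<longlongrightarrow> H r) (at_left r)"
    unfolding H_def using u_pos_limit by (intro tendsto_intros tendsto_u_at_left tendsto_v_at_left) auto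
  then have "0 \<le> H r"
    by (rule tendsto_lowerbound)
      (use eventually_in_region_at_left in \<open>auto elim: eventually_mono simp: in_region_def H_def power2_eq_square\<close>)
  moreover have "H r \<noteq> 0"
  proof
    assume "H r = 0"
    define U W where "U = u r" and "W = - v r"
    have U: "U > 0" and W: "W > 0" and WU: "W\<^sup>2 = q * U powr (p + 1)"
      using u_pos_limit v_neg_limit \<open>H r = 0\<close> by (auto simp: U_def W_def H_def power2_eq_square)
    have "U \<le> 1"
      using u_le_1_before[of r] r by (simp add: U_def)
    then have "W \<le> 2 * U"
      using abs_le_twice_if_square_le_powr[of U p q "- W"] U WU W p_gt_1 q_lt_2 by simp
    then have source: "truncated_source p M (u r) (v r) = U powr p + M * W powr q"
      using U W u_le_1_before[of r] r by (simp add: truncated_source_eq U_def W_def q_def)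
    have "((\<lambda>y. u y powr (p + 1)) has_real_derivative (p + 1) * u r powr p * v r) (at r)"
      using DERIV_chain2[OF has_real_derivative_powr[OF u_pos_limit, of "p + 1"] u_deriv_at[OF r]]
      by simp
    from DERIV_diff[OF DERIV_cmult[OF this, of q] DERIV_mult[OF v_deriv[OF r] v_deriv[OF r]]]
    have "(H has_real_derivative q * ((p + 1) * U powr p * (- W))
        - 2 * (- W) * (- (U powr p + M * W powr q) - (real N - 1) / r * (- W))) (at r)"
      unfolding H_def[abs_def] source by (simp add: U_def W_def algebra_simps)
    then have "eventually (\<lambda>y. H y < H r) (at_left r)"
      using boundary_derivative_pos[OF r U W WU] by (rule eventually_at_left_less_if_deriv_pos)
    with eventually_in_region_at_left have "eventually (\<lambda>y. False) (at_left r)"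
      by eventually_elim (use \<open>H r = 0\<close> in \<open>auto simp: in_region_def H_def power2_eq_square\<close>)
    then show False by simp
  qed
  ultimately show ?thesis
    by (simp add: H_def power2_eq_square)
qed

end

lemma region_invariant:
  assumes "r > 0"
  shows "in_region r"
proof (rule continuous_induction_pos_real[OF eventually_in_region_at_right_0 _ _ assms])
  fix s assume s: "s > 0" and before: "\<And>t. 0 < t \<Longrightarrow> t < s \<Longrightarrow> in_region t"
  show "in_region s"
    unfolding in_region_def
    using u_pos_limit[OF s before] v_neg_limit[OF s before] region_strict_limit[OF s before] by simp
next
  fix s assume s: "s > 0" and upto: "\<And>t. 0 < t \<Longrightarrow> t \<le> s \<Longrightarrow> in_region t"
  have "eventually in_region (at s)"
    using eventually_in_region_at[OF s upto[OF s]] by simp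
  then show "eventually in_region (at_right s)"
    by (simp add: eventually_at_split)
qed

lemma u_le_1: "0 \<le> r \<Longrightarrow> u r \<le> 1"
  by (rule u_le_u0) (use region_invariant in \<open>auto simp: in_region_def less_imp_le\<close>)

lemma abs_v_le_2: "r > 0 \<Longrightarrow> \<bar>v r\<bar> \<le> 2"
  using abs_le_twice_if_square_le_powr[of "u r" p q "v r"] region_invariant[of r] u_le_1[of r] p_gt_1 q_lt_2
  by (simp add: in_region_def)

lemma source_eq:
  assumes r: "r > 0"
  shows "truncated_source p M (u r) (v r) = \<bar>u r\<bar> powr (p - 1) * u r + M * \<bar>v r\<bar> powr (2 * p / (p + 1))"
proof -
  have "u r > 0" using region_invariant[OF r] by (simp add: in_region_def)
  then have "u r powr p = u r powr (p - 1) * u r"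
    using powr_add[of "u r" "p - 1" 1] by simp
  then show ?thesis
    using \<open>u r > 0\<close> u_le_1[of r] abs_v_le_2[OF r] r by (simp add: truncated_source_eq)
qed

definition u'' :: "real \<Rightarrow> real" where
  "u'' r = (if r = 0 then - 1 / N else - truncated_source p M (u r) (v r) - (real N - 1) / r * v r)"

lemma v_has_derivative_u'': "r \<ge> 0 \<Longrightarrow> (v has_real_derivative u'' r) (at r within {0..})"
  using v_deriv_0 has_field_derivative_at_within[OF v_deriv]
  by (cases "r = 0") (auto simp: u''_def truncated_source_1_0)

lemma continuous_on_u'': "continuous_on {0..} u''"
  unfolding continuous_on_def
proof
  fix x :: real assume x: "x \<in> {0..}"
  define E where "E s = - truncated_source p M (u s) (v s) - (real N - 1) * (v s / s)" for s
  obtain L where "\<And>a b c d. \<bar>truncated_source p M a b - truncated_source p M c d\<bar> \<le> L * (\<bar>a - c\<bar> + \<bar>b - d\<bar>)"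
    using truncated_source_lipschitz[of p M] p_gt_1 by auto
  then have "continuous_on {0..} (\<lambda>s. truncated_source p M (u s) (v s))"
    by (rule continuous_on_lipschitz2_compose[OF _ continuous_on_u continuous_on_v])
  then have source: "((\<lambda>s. truncated_source p M (u s) (v s)) \<longlongrightarrow> truncated_source p M (u x) (v x)) (at x within {0..})"
    using x by (simp add: continuous_on_def)
  have "eventually (\<lambda>s. E s = u'' s) (at x within {0..})"
    unfolding eventually_at
    by (rule exI[of _ "if x = 0 then 1 else x"]) (use x in \<open>auto simp: E_def u''_def dist_real_def\<close>)
  moreover have "(E \<longlongrightarrow> u'' x) (at x within {0..})"
  proof (cases "x = 0")
    case True
    have vs: "((\<lambda>s. v s / s) \<longlongrightarrow> - 1 / N) (at 0 within {0..})"
      using v_div_tendsto by (simp add: at_within_Ici_at_right truncated_source_1_0)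
    have "(E \<longlongrightarrow> - truncated_source p M 1 0 - (real N - 1) * (- 1 / N)) (at 0 within {0..})"
      unfolding E_def using source True u_0 v_0
      by (intro tendsto_diff tendsto_minus tendsto_mult[OF tendsto_const vs]) simp
    then show ?thesis
      using True N_ge_1 by (simp add: u''_def truncated_source_1_0 field_simps)
  next
    case False
    have "(v \<longlongrightarrow> v x) (at x within {0..})"
      using continuous_on_v x by (simp add: continuous_on_def)
    then have "(E \<longlongrightarrow> E x) (at x within {0..})"
      unfolding E_def using source False by (intro tendsto_intros) auto
    then show ?thesis
      using False by (simp add: E_def u''_def)
  qed
  ultimately show "(u'' \<longlongrightarrow> u'' x) (at x within {0..})"
    using Lim_transform_eventually by blast
qed

lemma ground_state: "ground_state N p M u"
  unfolding ground_state_def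
proof (intro conjI exI allI impI)
  show "0 \<le> u r" if "0 \<le> r" for r
    using that region_invariant[of r] u_0 by (cases "r = 0") (auto simp: in_region_def)
  show "continuous_on {0..} u''" by (rule continuous_on_u'')
  show "v 0 = 0" by (rule v_0)
  fix r :: real
  show "0 \<le> r \<Longrightarrow> (u has_real_derivative v r) (at r within {0..})" by (rule u_deriv)
  show "0 \<le> r \<Longrightarrow> (v has_real_derivative u'' r) (at r within {0..})" by (rule v_has_derivative_u'')
  show "- u'' r - (real N - 1) / r * v r = \<bar>u r\<bar> powr (p - 1) * u r + M * \<bar>v r\<bar> powr (2 * p / (p + 1))"
    if "0 < r"
    using that source_eq[OF that] by (simp add: u''_def)
qed

lemma deriv_u: "r > 0 \<Longrightarrow> deriv u r = v r"
  by (rule DERIV_imp_deriv[OF u_deriv_at])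

lemma deriv_u_square_less: "r > 0 \<Longrightarrow> (deriv u r)\<^sup>2 < 2 * p / (p + 1) * u r powr (p + 1)"
  using region_invariant[of r] by (simp add: deriv_u in_region_def q_def)

subsection \<open>The trajectory\<close>

definition "a = 2 / (p - 1)"
definition "xi t = exp (a * t) * u (exp t)"
definition "eta t = - (exp ((a + 1) * t) * v (exp t))"

lemma a_pos: "a > 0"
  using p_gt_1 by (simp add: a_def)

lemma traj_eq: "traj p u t = (xi t, eta t)"
proof -
  have "exp t powr (2 / (p - 1)) = exp (a * t)"
    by (simp add: exp_powr_real a_def mult.commute)
  moreover have "exp t powr ((p + 1) / (p - 1)) = exp ((a + 1) * t)"
    using p_gt_1 by (simp add: exp_powr_real a_def field_simps)
  ultimately show ?thesis
    by (simp add: traj_def xi_def eta_def deriv_u)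
qed

lemma xi_pos: "xi t > 0"
  using region_invariant[of "exp t"] by (simp add: xi_def in_region_def)

lemma eta_square_less: "(eta t)\<^sup>2 < q * xi t powr (p + 1)"
proof -
  have "a * (p + 1) = 2 * (a + 1)"
    using p_gt_1 by (simp add: a_def field_simps)
  then have "exp (a * t) powr (p + 1) = exp ((a + 1) * t) ^ 2"
    by (simp add: exp_powr_real algebra_simps flip: exp_of_nat_mult)
  then have xi: "xi t powr (p + 1) = exp ((a + 1) * t) ^ 2 * u (exp t) powr (p + 1)"
    using region_invariant[of "exp t"] by (simp add: xi_def in_region_def powr_mult)
  have "(eta t)\<^sup>2 = exp ((a + 1) * t) ^ 2 * (v (exp t))\<^sup>2"
    by (simp add: eta_def power_mult_distrib)
  also have "\<dots> < exp ((a + 1) * t) ^ 2 * (q * u (exp t) powr (p + 1))"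
    using region_invariant[of "exp t"] by (intro mult_strict_left_mono) (auto simp: in_region_def)
  also have "\<dots> = q * xi t powr (p + 1)"
    by (simp only: xi mult_ac)
  finally show ?thesis .
qed

lemma xi_deriv: "(xi has_real_derivative a * xi t - eta t) (at t)"
proof -
  have "(xi has_real_derivative a * exp (a * t) * u (exp t) + exp (a * t) * (v (exp t) * exp t)) (at t)"
    unfolding xi_def[abs_def]
    by (auto intro!: derivative_eq_intros DERIV_chain2[OF u_deriv_at])
  then show ?thesis
    by (simp add: xi_def eta_def algebra_simps exp_add)
qed

lemma eta_less_if_xi_small:
  assumes "xi t powr (p - 1) \<le> a\<^sup>2 / q"
  shows "eta t < a * xi t"
proof -
  have "xi t powr (p + 1) = (xi t)\<^sup>2 * xi t powr (p - 1)"
    using xi_pos[of t] powr_add[of "xi t" 2 "p - 1"] by (simp add: add.commute)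
  then have "(eta t)\<^sup>2 < q * (xi t)\<^sup>2 * xi t powr (p - 1)"
    using eta_square_less[of t] by (simp add: mult.assoc)
  also have "\<dots> \<le> q * (xi t)\<^sup>2 * (a\<^sup>2 / q)"
    using assms q_gt_1 by (intro mult_left_mono) auto
  also have "\<dots> = (a * xi t)\<^sup>2"
    using q_gt_1 by (simp add: power_mult_distrib)
  finally show ?thesis
    using a_pos xi_pos[of t] by (auto intro: power2_less_imp_less)
qed

lemma traj_not_tendsto_0: "\<not> ((traj p u \<longlongrightarrow> (0, 0)) at_top)"
proof
  assume "(traj p u \<longlongrightarrow> (0, 0)) at_top"
  then have xi_lim: "(xi \<longlongrightarrow> 0) at_top"
    using tendsto_fst by (fastforce simp: traj_eq)
  have "(a\<^sup>2 / q) powr (1 / (p - 1)) > 0"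
    using a_pos q_gt_1 by simp
  from order_tendstoD(2)[OF xi_lim this] obtain t0
    where small: "\<And>t. t \<ge> t0 \<Longrightarrow> xi t < (a\<^sup>2 / q) powr (1 / (p - 1))"
    unfolding eventually_at_top_linorder by blast
  have "xi t0 \<le> xi t" if "t0 \<le> t" for t
  proof (rule DERIV_nonneg_imp_increasing_open[OF that])
    fix s assume "t0 < s" "s < t"
    then have "xi s powr (p - 1) \<le> ((a\<^sup>2 / q) powr (1 / (p - 1))) powr (p - 1)"
      using small[of s] xi_pos[of s] p_gt_1 by (intro powr_mono2) auto
    also have "\<dots> = a\<^sup>2 / q"
      using p_gt_1 q_gt_1 by (simp add: powr_powr)
    finally show "\<exists>y. (xi has_real_derivative y) (at s) \<and> 0 \<le> y"
      using xi_deriv[of s] eta_less_if_xi_small[of s] by (auto intro!: exI[of _ "a * xi s - eta s"])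
  qed (use xi_deriv in \<open>blast intro: continuous_at_imp_continuous_on DERIV_isCont\<close>)
  then have "xi t0 \<le> 0"
    by (intro tendsto_lowerbound[OF xi_lim]) (auto simp: eventually_at_top_linorder)
  then show False
    using xi_pos[of t0] by simp
qed

lemma traj_not_tendsto_P1:
  assumes "0 < X1" "X1 < X2" "PhiM N p M X1 = 0" "PhiM N p M X2 = 0"
  shows "\<not> ((traj p u \<longlongrightarrow> (X1, 2 / (p - 1) * X1)) at_top)"
proof
  assume "(traj p u \<longlongrightarrow> (X1, 2 / (p - 1) * X1)) at_top"
  then have "(xi \<longlongrightarrow> X1) at_top" "(eta \<longlongrightarrow> 2 / (p - 1) * X1) at_top"
    using tendsto_fst tendsto_snd by (fastforce simp: traj_eq)+
  then have "((\<lambda>t. q * xi t powr (p + 1) - (eta t)\<^sup>2) \<longlongrightarrow> q * X1 powr (p + 1) - (2 / (p - 1) * X1)\<^sup>2) at_top"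
    using assms(1) by (intro tendsto_intros) auto
  then have "0 \<le> q * X1 powr (p + 1) - (2 / (p - 1) * X1)\<^sup>2"
    by (rule tendsto_lowerbound) (use eta_square_less in \<open>auto intro!: always_eventually less_imp_le\<close>)
  then show False
    using PhiM_smaller_zero_above_curve[OF p_gt_1 N_ge_1 M_le M_less_if_N_1 assms] by (simp add: q_def)
qed

end

theorem lemma4p4:
  fixes N :: nat and p M :: real
  assumes "p > 1"
    and "(N \<ge> 2 \<and> M \<le> - mu_star1 p) \<or> (N = 1 \<and> M < - mu_star1 p)"
  shows "\<exists>u. ground_state N p M u
          \<and> (\<forall>r>0. (deriv u r)\<^sup>2 < 2 * p / (p + 1) * u r powr (p + 1))
          \<and> \<not> ((traj p u \<longlongrightarrow> (0, 0)) at_top)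
          \<and> (((N \<ge> 3 \<and> p < real N / (real N - 2)) \<or> N \<in> {1, 2}) \<longrightarrow>
               (\<forall>X1 X2. 0 < X1 \<and> X1 < X2 \<and> {X. X > 0 \<and> PhiM N p M X = 0} = {X1, X2} \<longrightarrow>
                  \<not> ((traj p u \<longlongrightarrow> (X1, 2 / (p - 1) * X1)) at_top)))"
proof -
  have N: "N \<ge> 1" using assms(2) by auto
  obtain u v where "radial_solution N (truncated_source p M) 1 u v"
    using truncated_radial_solution_exists[of p N M] assms(1) N by auto
  then interpret truncated_radial_solution N p M u v
    using assms by (auto intro!: truncated_radial_solution.intro truncated_radial_solution_axioms.intro)
  show ?thesis
  proof (intro exI[of _ u] conjI allI impI ground_state deriv_u_square_less traj_not_tendsto_0)
    fix X1 X2 assume X: "0 < X1 \<and> X1 < X2 \<and> {X. X > 0 \<and> PhiM N p M X = 0} = {X1, X2}"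
    then have "PhiM N p M X1 = 0" "PhiM N p M X2 = 0"
      by blast+
    with X show "\<not> ((traj p u \<longlongrightarrow> (X1, 2 / (p - 1) * X1)) at_top)"
      using traj_not_tendsto_P1 by blast
  qed
qed

end
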